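(* Let $G$ be a finite abelian group, $M$ a $\hat G$-linear, left inductive monoid, and $e$ a non-zero idempotent of $M$. Then the $\mathcal J$-class $\mathcal J_e$ is an apex for the representation $P(e)$ (with the left translation action of $M$), and for its subrepresentation $P(e)e$.
   Context: $\hat G=G\sqcup\{0\}$ with $0$ absorbing. $\mathrm{Vect}_{\hat G}$: objects are finite pointed sets with an action of $\hat G$ ($0v=0$, $g0=0$) such that $G$ acts freely on nonzero elements; morphisms $f$ satisfy $f(0)=0$, $f(gv)=gf(v)$, $f(v_1)=f(v_2)\neq0\Rightarrow Gv_1=Gv_2$. A $\hat G$-linear monoid is a finite monoid $M$ with absorbing element $0_M$ containing $G$ as a subgroup of units commuting with all of $M$, with $G$ acting freely by translation on $M\setminus\{0_M\}$. $\mathrm{Rep}(M,\hat G)$: objects of $\mathrm{Vect}_{\hat G}$ with an $M$-action by morphisms of $\mathrm{Vect}_{\hat G}$, $0_M$ acting as zero and $g\in G$ as the scalar $g$. $\mathrm{Ann}_M(V)=\{x\in M: xV=0\}$. For $a\in M$, $J(a)=MaM$; $\mathcal J_a$ is the class of $a$ under $a\sim b\iff J(a)=J(b)$; a $\mathcal J$-class is regular if it contains an idempotent. $I(a)=\{x\in J(a):MxM\neq J(a)\}$; $P(a)=(J(a)\setminus I(a))\cup\{0\}$ with product $xy$ if $xy\in J(a)\setminus I(a)$, else $0$, and $M$ acts on $P(a)$ by left translation in the same way. $M$ is left inductive if $P(e)$ is an object of $\mathrm{Rep}(M,\hat G)$ under left translation for every idempotent $e$. $P(e)e=\{xe:x\in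 P(e)\}$ (product in $P(e)$), an $M$-stable subset. For a $\mathcal J$-class $J$, $I_J=\{x\in M: J\not\subseteq MxM\}$; a regular $\mathcal J$-class $J$ is an apex of $V$ if $\mathrm{Ann}_M(V)=I_J$. *)

theory Defs
  imports Main
begin

(* The finite monoid M is the whole (finite) type 'm; its absorbing element 0_M is the
   class constant 0 (mult_zero), its unit is 1.  G is a subset of M. *)

definition hat_linear_monoid :: "'m::{monoid_mult,mult_zero,finite} set \<Rightarrow> bool" where
  "hat_linear_monoid G \<longleftrightarrow>
     1 \<in> G \<and> (\<forall>g\<in>G. \<forall>h\<in>G. g * h \<in> G) \<and>
     (\<forall>g\<in>G. \<exists>h\<in>G. g * h = 1 \<and> h * g = 1) \<and>
     (\<forall>g\<in>G. \<forall>x. g * x = x * g) \<and>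
     (\<forall>g\<in>G. \<forall>x. x \<noteq> 0 \<longrightarrow> g * x = x \<longrightarrow> g = 1)"

(* Objects of Vect_{hat G}: carrier V, base point z, action sc of hat G = G \<union> {0_M} *)
definition vect_obj :: "'m::{monoid_mult,mult_zero} set \<Rightarrow> 'v set \<Rightarrow> 'v \<Rightarrow> ('m \<Rightarrow> 'v \<Rightarrow> 'v) \<Rightarrow> bool" where
  "vect_obj G V z sc \<longleftrightarrow>
     finite V \<and> z \<in> V \<and>
     (\<forall>g\<in>G \<union> {0}. \<forall>v\<in>V. sc g v \<in> V) \<and>
     (\<forall>v\<in>V. sc 1 v = v) \<and>
     (\<forall>g\<in>G \<union> {0}. \<forall>h\<in>G \<union> {0}. \<forall>v\<in>V. sc (g * h) v = sc g (sc h v)) \<and>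
     (\<forall>v\<in>V. sc 0 v = z) \<and> (\<forall>g\<in>G \<union> {0}. sc g z = z) \<and>
     (\<forall>g\<in>G. \<forall>v\<in>V. v \<noteq> z \<longrightarrow> sc g v = v \<longrightarrow> g = 1)"

definition vect_hom :: "'m::{monoid_mult,mult_zero} set \<Rightarrow> 'v set \<Rightarrow> 'v \<Rightarrow> ('m \<Rightarrow> 'v \<Rightarrow> 'v)
     \<Rightarrow> 'w set \<Rightarrow> 'w \<Rightarrow> ('m \<Rightarrow> 'w \<Rightarrow> 'w) \<Rightarrow> ('v \<Rightarrow> 'w) \<Rightarrow> bool" where
  "vect_hom G V zV scV W zW scW f \<longleftrightarrow>
     (\<forall>v\<in>V. f v \<in> W) \<and> f zV = zW \<and>
     (\<forall>g\<in>G \<union> {0}. \<forall>v\<in>V. f (scV g v) = scW g (f v)) \<and>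
     (\<forall>v1\<in>V. \<forall>v2\<in>V. f v1 = f v2 \<and> f v1 \<noteq> zW \<longrightarrow>
        (\<lambda>g. scV g v1) ` G = (\<lambda>g. scV g v2) ` G)"

definition rep_obj :: "'m::{monoid_mult,mult_zero} set \<Rightarrow> 'v set \<Rightarrow> 'v \<Rightarrow> ('m \<Rightarrow> 'v \<Rightarrow> 'v)
     \<Rightarrow> ('m \<Rightarrow> 'v \<Rightarrow> 'v) \<Rightarrow> bool" where
  "rep_obj G V z sc act \<longleftrightarrow>
     vect_obj G V z sc \<and>
     (\<forall>m. vect_hom G V z sc V z sc (act m)) \<and>
     (\<forall>v\<in>V. act 1 v = v) \<and>
     (\<forall>m n. \<forall>v\<in>V. act (m * n) v = act m (act n v)) \<and>
     (\<forall>v\<in>V. act 0 v = z) \<and>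
     (\<forall>g\<in>G. \<forall>v\<in>V. act g v = sc g v)"

definition Jideal :: "'m::monoid_mult \<Rightarrow> 'm set" where
  "Jideal a = {x * a * y | x y. True}"

definition Jclass :: "'m::monoid_mult \<Rightarrow> 'm set" where
  "Jclass a = {b. Jideal b = Jideal a}"

definition regular_Jclass :: "'m::monoid_mult set \<Rightarrow> bool" where
  "regular_Jclass Jc \<longleftrightarrow> (\<exists>e\<in>Jc. e * e = e)"

definition Ibelow :: "'m::monoid_mult \<Rightarrow> 'm set" where
  "Ibelow a = {x \<in> Jideal a. Jideal x \<noteq> Jideal a}"

definition Pset :: "'m::{monoid_mult,mult_zero} \<Rightarrow> 'm set" where
  "Pset a = (Jideal a - Ibelow a) \<union> {0}"

(* product in P(a), also the left translation action of M on P(a) *)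
definition Pmul :: "'m::{monoid_mult,mult_zero} \<Rightarrow> 'm \<Rightarrow> 'm \<Rightarrow> 'm" where
  "Pmul a x y = (if x * y \<in> Jideal a - Ibelow a then x * y else 0)"

definition left_inductive :: "'m::{monoid_mult,mult_zero} set \<Rightarrow> bool" where
  "left_inductive G \<longleftrightarrow>
     (\<forall>e::'m. e * e = e \<longrightarrow> rep_obj G (Pset e) 0 (Pmul e) (Pmul e))"

definition PeSet :: "'m::{monoid_mult,mult_zero} \<Rightarrow> 'm set" where
  "PeSet e = (\<lambda>x. Pmul e x e) ` Pset e"

definition Ann :: "('m \<Rightarrow> 'v \<Rightarrow> 'v) \<Rightarrow> 'v set \<Rightarrow> 'v \<Rightarrow> 'm set" where
  "Ann act V z = {x. \<forall>v\<in>V. act x v = z}"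

definition I_J :: "'m::monoid_mult set \<Rightarrow> 'm set" where
  "I_J Jc = {x. \<not> Jc \<subseteq> Jideal x}"

definition is_apex :: "'m::monoid_mult set \<Rightarrow> ('m \<Rightarrow> 'v \<Rightarrow> 'v) \<Rightarrow> 'v set \<Rightarrow> 'v \<Rightarrow> bool" where
  "is_apex Jc act V z \<longleftrightarrow> regular_Jclass Jc \<and> Ann act V z = I_J Jc"

end

theory Submission
  imports Defs
begin

(* An element x annihilates P(e) exactly when e is not in MxM.  If e = axb, then v = be is a
   nonzero element of P(e)e with xv in the J-class of e, so x does not even annihilate P(e)e; if e
   is not in MxM, no product xv lies in the J-class of e. *)

lemma mult_mem_Jideal: "a * x * b \<in> Jideal (x::'m::monoid_mult)"
  unfolding Jideal_def by blast

lemma self_mem_Jideal: "(x::'m::monoid_mult) \<in> Jideal x"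
  using mult_mem_Jideal[of 1 x 1] by simp

lemma Jideal_subset: "(y::'m::monoid_mult) \<in> Jideal x \<Longrightarrow> Jideal y \<subseteq> Jideal x"
  unfolding Jideal_def by (auto simp: mult.assoc) (metis mult.assoc)

lemma mem_Jideal_diff_Ibelow:
  fixes x y :: "'m::monoid_mult"
  assumes "y \<in> Jideal x" and "x \<in> Jideal y"
  shows "y \<in> Jideal x - Ibelow x"
  using assms Jideal_subset unfolding Ibelow_def by blast

lemma mem_I_J_Jclass_iff: "x \<in> I_J (Jclass e) \<longleftrightarrow> (e::'m::monoid_mult) \<notin> Jideal x"
proof
  assume "x \<in> I_J (Jclass e)"
  then obtain b where "Jideal b = Jideal e" "b \<notin> Jideal x"
    unfolding I_J_def Jclass_def by auto
  then show "e \<notin> Jideal x" using Jideal_subset self_mem_Jideal by blast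
next
  assume "e \<notin> Jideal x"
  then show "x \<in> I_J (Jclass e)" unfolding I_J_def Jclass_def using self_mem_Jideal by blast
qed

lemma regular_Jclass_idempotent: "(e::'m::monoid_mult) * e = e \<Longrightarrow> regular_Jclass (Jclass e)"
  unfolding regular_Jclass_def Jclass_def by blast

lemma Pmul_eq_mult: "x * y \<in> Jideal a - Ibelow a \<Longrightarrow> Pmul a x y = x * y"
  unfolding Pmul_def by simp

lemma PeSet_subset_Pset: "PeSet e \<subseteq> Pset (e::'m::{monoid_mult,mult_zero})"
  unfolding PeSet_def Pset_def Pmul_def by auto

lemma Pmul_eq_zero_if_not_mem_Jideal:
  fixes e :: "'m::{monoid_mult,mult_zero}"
  assumes "e \<notin> Jideal x"
  shows "Pmul e x v = 0"
proof (rule ccontr)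
  assume "Pmul e x v \<noteq> 0"
  then have "Jideal (x * v) = Jideal e"
    unfolding Pmul_def Ibelow_def by (auto split: if_splits)
  moreover have "x * v \<in> Jideal x" using mult_mem_Jideal[of 1 x v] by simp
  ultimately show False using assms Jideal_subset self_mem_Jideal by blast
qed

lemma PeSet_not_annihilated:
  fixes e :: "'m::{monoid_mult,mult_zero}"
  assumes idem: "e * e = e" and nonzero: "e \<noteq> 0" and "e \<in> Jideal x"
  shows "\<exists>v\<in>PeSet e. Pmul e x v \<noteq> 0"
proof -
  obtain a b where e_eq: "e = a * x * b" using \<open>e \<in> Jideal x\<close> unfolding Jideal_def by auto
  define v where "v = b * e"
  have e_via_v: "e = (a * x) * v * 1" and e_via_xv: "e = a * (x * v) * 1"
    using e_eq idem by (simp_all add: v_def mult.assoc)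
  have "v = b * e * 1" and "x * v = (x * b) * e * 1"
    by (simp_all add: v_def mult.assoc)
  then have v_J: "v \<in> Jideal e" and xv_J: "x * v \<in> Jideal e"
    by (metis mult_mem_Jideal)+
  have "e \<in> Jideal v" and "e \<in> Jideal (x * v)"
    using e_via_v e_via_xv by (metis mult_mem_Jideal)+
  then have v_P: "v \<in> Jideal e - Ibelow e" and xv_P: "x * v \<in> Jideal e - Ibelow e"
    using v_J xv_J mem_Jideal_diff_Ibelow by blast+
  have "Pmul e v e = v"
    using v_P idem by (simp add: Pmul_eq_mult v_def mult.assoc)
  moreover have "v \<in> Pset e" using v_P unfolding Pset_def by simp
  ultimately have "v \<in> PeSet e" unfolding PeSet_def by force
  moreover have "x * v \<noteq> 0" using e_via_xv nonzero by auto
  then have "Pmul e x v \<noteq> 0" using xv_P by (simp add: Pmul_eq_mult)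
  ultimately show ?thesis by blast
qed

lemma Ann_Pmul_eq_I_J:
  fixes e :: "'m::{monoid_mult,mult_zero}"
  assumes "e * e = e" and "e \<noteq> 0" and "PeSet e \<subseteq> V"
  shows "Ann (Pmul e) V 0 = I_J (Jclass e)"
  using PeSet_not_annihilated[OF assms(1,2)] assms(3) Pmul_eq_zero_if_not_mem_Jideal
  unfolding Ann_def mem_I_J_Jclass_iff set_eq_iff by blast

lemma is_apex_Pmul:
  fixes e :: "'m::{monoid_mult,mult_zero}"
  assumes "e * e = e" and "e \<noteq> 0" and "PeSet e \<subseteq> V"
  shows "is_apex (Jclass e) (Pmul e) V 0"
  using assms regular_Jclass_idempotent Ann_Pmul_eq_I_J unfolding is_apex_def by blast

theorem mainTheorem7:
  fixes G :: "'m::{monoid_mult,mult_zero,finite} set" and e :: 'm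
  assumes "hat_linear_monoid G"
    and "left_inductive G"
    and "e * e = e" and "e \<noteq> 0"
  shows "is_apex (Jclass e) (Pmul e) (Pset e) 0 \<and> is_apex (Jclass e) (Pmul e) (PeSet e) 0"
  using is_apex_Pmul[OF assms(3,4) PeSet_subset_Pset] is_apex_Pmul[OF assms(3,4) order_refl]
  by blast

end
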